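(* Assume $\rho_n:=ne^{-\zeta(d-1)R_n/2}\to c\in(0,\infty]$. Let $0<\gamma<1/2$ and $0<a<1$. Identify $x_i$ with its hyperbolic polar coordinates $(t_i,\theta_i)$, where $t_i=R_n-d(0,x_i)$ and $\theta_i\in S^{d-1}$. Then, as $n\to\infty$, $$\int_{[0,\gamma R_n]^3\times(S^{d-1})^3}\bigl[\mathbb P(D^2_{x_1,x_3}S_n^{(\gamma)}\ne0)\,\mathbb P(D^2_{x_2,x_3}S_n^{(\gamma)}\ne0)\bigr]^a\prod_{i=1}^3\bar\rho_{n,\alpha}(t_i)\,\pi(\mathrm d\theta_i)\,\mathrm dt_i=O\bigl(e^{-\zeta(d-1)(1-2\gamma)R_n}\bigr),$$ and $$\int_{[0,\gamma R_n]^2\times(S^{d-1})^2}\bigl[\mathbb P(D^2_{x_1,x_2}S_n^{(\gamma)}\ne0)\bigr]^a\prod_{i=1}^2\bar\rho_{n,\alpha}(t_i)\,\pi(\mathrm d\theta_i)\,\mathrm dt_i=O\bigl(e^{-\zeta(d-1)(1-2\gamma)R_n/2}\bigr).$$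
   Context: Fix an integer $d\ge2$ and parameters $\zeta,\alpha>0$. Geometry. The Poincaré ball $B_d^{(\zeta)}$ is the open unit ball of $\mathbb R^d$ with metric $ds^2=\frac{4}{\zeta^2}\frac{|dx|^2}{(1-|x|^2)^2}$ and hyperbolic distance $d(\cdot,\cdot)$. $R_n\to\infty$ is deterministic. For a point $x$ write $t_x=R_n-d(0,x)$. Densities. $\pi$ is the uniform probability measure on $S^{d-1}$. $\bar\rho_{n,\alpha}(t)=\sinh^{d-1}(\alpha(R_n-t))/\int_0^{R_n}\sinh^{d-1}(\alpha s)\,ds$ on $[0,R_n]$. Random points. $\mathcal P_n$ is a Poisson point process whose points $x$ have $t_x$ with density $\bar\rho_{n,\alpha}$ and direction distributed as $\pi$ independently, with total intensity $n$. Sub-tree count functional. Let $\Gamma_k$ ($k\ge2$) be a fixed tree on $[k]$ with edge set $E$. For a finite configuration $\mu$ define $$S_n^{(\gamma)}(\mu)=\sum_{(u_1,\dots,u_k)}\mathbf 1\{0<d(u_i,u_j)\le R_n\ \forall(i,j)\in E,\ t_{u_i}\le\gamma R_n\ \forall i\},$$ summed over ordered $k$-tuples of distinct points of $\mu$. Set $S_n^{(\gamma)}=S_n^{(\gamma)}(\mathcal P_n)$ and $$D^2_{x,y}S_n^{(\gamma)}=S_n^{(\gamma)}(\mathcal P_n\cup\{x,y\})-S_n^{(\gamma)}(\mathcal P_n\cup\{x\})-S_n^{(\gamma)}(\mathcal P_n\cup\{y\})+S_n^{(\gamma)}(\mathcal P_n).$$ *)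

theory Defs
  imports "HOL-Analysis.Analysis"
begin

text \<open>Hyperbolic distance in the Poincare ball of curvature minus zeta squared,
  i.e. metric 4/zeta^2 |dx|^2/(1-|x|^2)^2 on the open unit ball.\<close>
definition hdist :: "real \<Rightarrow> 'a::euclidean_space \<Rightarrow> 'a \<Rightarrow> real" where
  "hdist \<zeta> x y =
     arcosh (1 + 2 * (norm (x - y))\<^sup>2 / ((1 - (norm x)\<^sup>2) * (1 - (norm y)\<^sup>2))) / \<zeta>"

definition tcoord :: "real \<Rightarrow> real \<Rightarrow> 'a::euclidean_space \<Rightarrow> real" where
  "tcoord \<zeta> R x = R - hdist \<zeta> 0 x"

text \<open>The point with polar coordinates (t, theta): hyperbolic distance R - t from
  the origin in direction theta.\<close>
definition polar_pt :: "real \<Rightarrow> real \<Rightarrow> real \<times> 'a::euclidean_space \<Rightarrow> 'a" where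
  "polar_pt \<zeta> R u = tanh (\<zeta> * (R - fst u) / 2) *\<^sub>R snd u"

definition is_tree :: "nat \<Rightarrow> (nat \<times> nat) set \<Rightarrow> bool" where
  "is_tree k E \<longleftrightarrow> E \<subseteq> {(i, j). i < j \<and> j < k} \<and> card E = k - 1 \<and>
     (\<forall>i<k. (0, i) \<in> (E \<union> E\<inverse>)\<^sup>*)"

definition subtree_count ::
  "real \<Rightarrow> real \<Rightarrow> real \<Rightarrow> nat \<Rightarrow> (nat \<times> nat) set \<Rightarrow> 'a::euclidean_space list \<Rightarrow> nat" where
  "subtree_count \<zeta> R \<gamma> k E xs =
     card {f \<in> {..<k} \<rightarrow>\<^sub>E {..<length xs}. inj_on f {..<k} \<and>
        (\<forall>(i, j)\<in>E. 0 < hdist \<zeta> (xs ! f i) (xs ! f j) \<and> hdist \<zeta> (xs ! f i) (xs ! f j) \<le> R) \<and>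
        (\<forall>i<k. tcoord \<zeta> R (xs ! f i) \<le> \<gamma> * R)}"

definition D2 ::
  "real \<Rightarrow> real \<Rightarrow> real \<Rightarrow> nat \<Rightarrow> (nat \<times> nat) set \<Rightarrow> 'a::euclidean_space list \<Rightarrow> 'a \<Rightarrow> 'a \<Rightarrow> int" where
  "D2 \<zeta> R \<gamma> k E xs x y =
     int (subtree_count \<zeta> R \<gamma> k E (xs @ [x, y])) - int (subtree_count \<zeta> R \<gamma> k E (xs @ [x]))
     - int (subtree_count \<zeta> R \<gamma> k E (xs @ [y])) + int (subtree_count \<zeta> R \<gamma> k E xs)"

text \<open>Uniform probability measure on the unit sphere S^(d-1): radial projection of the
  uniform distribution on the unit ball.\<close>
definition sphere_unif :: "'a::euclidean_space measure" where
  "sphere_unif = distr (uniform_measure lborel (ball 0 1)) borel sgn"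

definition rho_bar :: "nat \<Rightarrow> real \<Rightarrow> real \<Rightarrow> real \<Rightarrow> real" where
  "rho_bar d \<alpha> R t = indicator {0..R} t * sinh (\<alpha> * (R - t)) ^ (d - 1) /
      integral {0..R} (\<lambda>s. sinh (\<alpha> * s) ^ (d - 1))"

definition point_law :: "real \<Rightarrow> real \<Rightarrow> real \<Rightarrow> 'a::euclidean_space measure" where
  "point_law \<zeta> \<alpha> R =
     distr (density lborel (\<lambda>t. ennreal (rho_bar DIM('a) \<alpha> R t)) \<Otimes>\<^sub>M sphere_unif) borel
       (polar_pt \<zeta> R)"

text \<open>Probability that a Poisson point process with intensity measure lam * nu
  (nu a probability measure) satisfies P: Poisson(lam) many i.i.d. nu points.\<close>
definition ppp_prob :: "real \<Rightarrow> 'a measure \<Rightarrow> ('a list \<Rightarrow> bool) \<Rightarrow> real" where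
  "ppp_prob lam \<nu> P =
     (\<Sum>m. lam ^ m / fact m * exp (- lam) *
        measure (PiM {..<m} (\<lambda>_. \<nu>))
          {\<omega> \<in> space (PiM {..<m} (\<lambda>_. \<nu>)). P (map \<omega> [0..<m])})"

definition pD2 ::
  "real \<Rightarrow> real \<Rightarrow> real \<Rightarrow> nat \<Rightarrow> (nat \<times> nat) set \<Rightarrow> nat \<Rightarrow> real \<Rightarrow> 'a::euclidean_space \<Rightarrow> 'a \<Rightarrow> real" where
  "pD2 \<zeta> \<alpha> \<gamma> k E n R x y =
     ppp_prob (real n) (point_law \<zeta> \<alpha> R) (\<lambda>xs. D2 \<zeta> R \<gamma> k E xs x y \<noteq> 0)"

definition outer_meas :: "real \<Rightarrow> real \<Rightarrow> real \<Rightarrow> (real \<times> 'a::euclidean_space) measure" where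
  "outer_meas \<alpha> \<gamma> R =
     density lborel (\<lambda>t. ennreal (indicator {0..\<gamma> * R} t * rho_bar DIM('a) \<alpha> R t))
       \<Otimes>\<^sub>M sphere_unif"

end

theory Submission
  imports Defs
begin

text \<open>A pair x, y contributes to the second difference D^2 only through sub-trees containing both
  points. A point with t \<le> \<gamma>R lies within O(e^{-\<zeta>(1-\<gamma>)R}) of the boundary sphere, so two such
  points at hyperbolic distance at most R have directions at chordal distance
  O(e^{-\<zeta>(1-2\<gamma>)R/2}); chaining along a tree on k vertices, D^2 vanishes identically unless the
  directions of x and y are within \<delta> = O(k e^{-\<zeta>(1-2\<gamma>)R/2}). As the probabilities lie in [0, 1],
  each integrand is at most the indicator of the corresponding closeness event, and a spherical
  cap of radius \<delta> has normalized measure O(\<delta>^{d-1}): this gives \<delta>^{d-1} for pairs and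
  \<delta>^{2(d-1)} for the triples, where x1 and x2 must both be close to x3.\<close>

section \<open>Sub-tree counts and the second difference\<close>

definition subtree_tuples ::
  "real \<Rightarrow> real \<Rightarrow> real \<Rightarrow> nat \<Rightarrow> (nat \<times> nat) set \<Rightarrow> 'a::euclidean_space list \<Rightarrow> (nat \<Rightarrow> nat) set" where
  "subtree_tuples \<zeta> R \<gamma> k E xs = {f \<in> {..<k} \<rightarrow>\<^sub>E {..<length xs}. inj_on f {..<k} \<and>
     (\<forall>(i, j)\<in>E. 0 < hdist \<zeta> (xs ! f i) (xs ! f j) \<and> hdist \<zeta> (xs ! f i) (xs ! f j) \<le> R) \<and>
     (\<forall>i<k. tcoord \<zeta> R (xs ! f i) \<le> \<gamma> * R)}"

lemma subtree_count_eq_card: "subtree_count \<zeta> R \<gamma> k E xs = card (subtree_tuples \<zeta> R \<gamma> k E xs)"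
  unfolding subtree_count_def subtree_tuples_def ..

lemma finite_subtree_tuples: "finite (subtree_tuples \<zeta> R \<gamma> k E xs)"
  by (rule finite_subset[of _ "{..<k} \<rightarrow>\<^sub>E {..<length xs}"]) (auto simp: subtree_tuples_def intro: finite_PiE)

lemma subtree_tuples_image_subset:
  "f \<in> subtree_tuples \<zeta> R \<gamma> k E xs \<Longrightarrow> f ` {..<k} \<subseteq> {..<length xs}"
  unfolding subtree_tuples_def by auto

lemma subtree_tuples_prefix:
  assumes "length ys \<le> length zs" "\<forall>j<length ys. zs ! j = ys ! j" and "E \<subseteq> {..<k} \<times> {..<k}"
  shows "{f \<in> subtree_tuples \<zeta> R \<gamma> k E zs. f ` {..<k} \<subseteq> {..<length ys}} = subtree_tuples \<zeta> R \<gamma> k E ys"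
proof -
  have same: "zs ! f i = ys ! f i" if "\<forall>i<k. f i < length ys" "i < k" for f i
    using that assms(2) by auto
  have "f \<in> subtree_tuples \<zeta> R \<gamma> k E zs \<and> f ` {..<k} \<subseteq> {..<length ys} \<longleftrightarrow>
        f \<in> subtree_tuples \<zeta> R \<gamma> k E ys" for f
  proof (cases "\<forall>i<k. f i < length ys")
    case True
    then have "\<forall>(i, j)\<in>E. zs ! f i = ys ! f i \<and> zs ! f j = ys ! f j"
      using same assms(3) by blast
    with True same assms(1) show ?thesis
      by (auto simp: subtree_tuples_def PiE_iff case_prod_beta intro: order_less_le_trans)
  qed (auto simp: subtree_tuples_def)
  then show ?thesis by blast
qed

lemma card_subtree_tuples_swap_last_two:
  assumes E: "E \<subseteq> {..<k} \<times> {..<k}"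
  shows "card {f \<in> subtree_tuples \<zeta> R \<gamma> k E (zs @ [u, v]). length zs \<notin> f ` {..<k}}
       = card {f \<in> subtree_tuples \<zeta> R \<gamma> k E (zs @ [v, u]). Suc (length zs) \<notin> f ` {..<k}}"
proof -
  define n where "n = length zs"
  define sw where "sw j = (if j = n then Suc n else if j = Suc n then n else j)" for j
  define h where "h f = (\<lambda>i. if i < k then sw (f i) else undefined)" for f :: "nat \<Rightarrow> nat"
  have sw_sw: "sw (sw j) = j" for j unfolding sw_def by auto
  have inj_sw: "inj sw" by (metis injI sw_sw)
  have h_maps: "h f \<in> {f \<in> subtree_tuples \<zeta> R \<gamma> k E (zs @ [b, a]). sw m \<notin> f ` {..<k}}"
    if f: "f \<in> {f \<in> subtree_tuples \<zeta> R \<gamma> k E (zs @ [a, b]). m \<notin> f ` {..<k}}" for f m a b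
  proof -
    have f_lt: "i < k \<Longrightarrow> f i < Suc (Suc n)" for i
      using f unfolding subtree_tuples_def n_def by auto
    have nth_sw: "j < Suc (Suc n) \<Longrightarrow> (zs @ [b, a]) ! sw j = (zs @ [a, b]) ! j" for j
      unfolding sw_def n_def by (auto simp: nth_append less_Suc_eq)
    have "i < k \<Longrightarrow> (zs @ [b, a]) ! h f i = (zs @ [a, b]) ! f i" for i
      using f_lt nth_sw unfolding h_def by auto
    moreover from this have "\<forall>(i, j)\<in>E. (zs @ [b, a]) ! h f i = (zs @ [a, b]) ! f i \<and>
        (zs @ [b, a]) ! h f j = (zs @ [a, b]) ! f j"
      using E by blast
    moreover have "inj_on (h f) {..<k}"
      using f inj_sw unfolding subtree_tuples_def h_def inj_on_def inj_def by auto
    moreover have "h f \<in> {..<k} \<rightarrow>\<^sub>E {..<length (zs @ [b, a])}"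
      using f_lt unfolding h_def sw_def n_def by (auto simp: PiE_iff extensional_def)
    moreover have "sw m \<notin> h f ` {..<k}"
      using f inj_sw unfolding h_def inj_def by (auto simp: image_iff)
    ultimately show ?thesis using f unfolding subtree_tuples_def by (auto simp: case_prod_beta)
  qed
  have h_h: "h (h f) = f" if "f \<in> extensional {..<k}" for f
    using that by (auto simp: h_def sw_sw extensional_def fun_eq_iff)
  have "bij_betw h {f \<in> subtree_tuples \<zeta> R \<gamma> k E (zs @ [u, v]). n \<notin> f ` {..<k}}
                   {f \<in> subtree_tuples \<zeta> R \<gamma> k E (zs @ [v, u]). Suc n \<notin> f ` {..<k}}"
  proof (rule bij_betw_byWitness[where f'=h])
    show "h ` {f \<in> subtree_tuples \<zeta> R \<gamma> k E (zs @ [u, v]). n \<notin> f ` {..<k}}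
        \<subseteq> {f \<in> subtree_tuples \<zeta> R \<gamma> k E (zs @ [v, u]). Suc n \<notin> f ` {..<k}}"
      using h_maps[where m=n] unfolding sw_def by auto
    show "h ` {f \<in> subtree_tuples \<zeta> R \<gamma> k E (zs @ [v, u]). Suc n \<notin> f ` {..<k}}
        \<subseteq> {f \<in> subtree_tuples \<zeta> R \<gamma> k E (zs @ [u, v]). n \<notin> f ` {..<k}}"
      using h_maps[where m="Suc n"] unfolding sw_def by auto
  qed (use h_h in \<open>auto simp: subtree_tuples_def PiE_def\<close>)
  then show ?thesis using bij_betw_same_card n_def by blast
qed

lemma image_subset_lessThan_Suc_iff:
  assumes "f ` A \<subseteq> {..<Suc (Suc n)}"
  shows "f ` A \<subseteq> {..<Suc n} \<longleftrightarrow> Suc n \<notin> f ` A"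
    and "f ` A \<subseteq> {..<n} \<longleftrightarrow> Suc n \<notin> f ` A \<and> n \<notin> f ` A"
  using assms by (auto simp: subset_iff image_iff less_Suc_eq) (metis less_Suc_eq)+

lemma card_subtree_tuples_avoiding_penultimate:
  assumes E: "E \<subseteq> {..<k} \<times> {..<k}"
  shows "card {f \<in> subtree_tuples \<zeta> R \<gamma> k E (xs @ [x, y]). length xs \<notin> f ` {..<k}}
       = card (subtree_tuples \<zeta> R \<gamma> k E (xs @ [y]))"
proof -
  let ?T = "subtree_tuples \<zeta> R \<gamma> k E (xs @ [y, x])"
  have range: "f ` {..<k} \<subseteq> {..<Suc (Suc (length xs))}" if "f \<in> ?T" for f
    using subtree_tuples_image_subset[OF that] by simp
  have "card {f \<in> subtree_tuples \<zeta> R \<gamma> k E (xs @ [x, y]). length xs \<notin> f ` {..<k}}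
      = card {f \<in> ?T. Suc (length xs) \<notin> f ` {..<k}}"
    by (rule card_subtree_tuples_swap_last_two[OF E])
  also have "{f \<in> ?T. Suc (length xs) \<notin> f ` {..<k}} = {f \<in> ?T. f ` {..<k} \<subseteq> {..<length (xs @ [y])}}"
    using image_subset_lessThan_Suc_iff(1)[OF range] by auto
  also have "\<dots> = subtree_tuples \<zeta> R \<gamma> k E (xs @ [y])"
    by (rule subtree_tuples_prefix[OF _ _ E]) (auto simp: nth_append)
  finally show ?thesis .
qed

text \<open>Inclusion-exclusion: a tuple of xs @ [x, y] that does not use both new points is counted
  exactly once among the four terms of the second difference.\<close>
lemma D2_eq_0_if_no_tuple_uses_both:
  assumes E: "E \<subseteq> {..<k} \<times> {..<k}"
    and no_both: "\<forall>f\<in>subtree_tuples \<zeta> R \<gamma> k E (xs @ [x, y]).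
                    length xs \<notin> f ` {..<k} \<or> Suc (length xs) \<notin> f ` {..<k}"
  shows "D2 \<zeta> R \<gamma> k E xs x y = 0"
proof -
  define n where "n = length xs"
  define T where "T zs = subtree_tuples \<zeta> R \<gamma> k E zs" for zs :: "'a list"
  define A where "A = {f \<in> T (xs @ [x, y]). Suc n \<notin> f ` {..<k}}"
  define B where "B = {f \<in> T (xs @ [x, y]). n \<notin> f ` {..<k}}"
  have "f ` {..<k} \<subseteq> {..<Suc (Suc n)}" if "f \<in> T (xs @ [x, y])" for f
    using subtree_tuples_image_subset that unfolding T_def n_def by fastforce
  note avoid = image_subset_lessThan_Suc_iff[OF this]
  have "T (xs @ [x, y]) = A \<union> B" using no_both unfolding A_def B_def T_def n_def by auto
  moreover have "A = T (xs @ [x])"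
  proof -
    have "A = {f \<in> T (xs @ [x, y]). f ` {..<k} \<subseteq> {..<length (xs @ [x])}}"
      unfolding A_def using avoid(1) by (simp add: n_def) blast
    also have "\<dots> = T (xs @ [x])"
      unfolding T_def by (rule subtree_tuples_prefix[OF _ _ E]) (auto simp: nth_append)
    finally show ?thesis .
  qed
  moreover have "A \<inter> B = T xs"
  proof -
    have "A \<inter> B = {f \<in> T (xs @ [x, y]). f ` {..<k} \<subseteq> {..<length xs}}"
      unfolding A_def B_def using avoid(2) by (simp add: n_def) blast
    also have "\<dots> = T xs"
      unfolding T_def by (rule subtree_tuples_prefix[OF _ _ E]) (auto simp: nth_append)
    finally show ?thesis .
  qed
  moreover have "card B = card (T (xs @ [y]))"
    unfolding B_def T_def n_def by (rule card_subtree_tuples_avoiding_penultimate[OF E])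
  moreover have "finite A" "finite B"
    unfolding A_def B_def T_def by (auto intro: rev_finite_subset[OF finite_subtree_tuples])
  ultimately have "card (T (xs @ [x, y])) + card (T xs) = card (T (xs @ [x])) + card (T (xs @ [y]))"
    by (metis card_Un_Int)
  then show ?thesis
    unfolding D2_def subtree_count_eq_card T_def[symmetric] by linarith
qed

section \<open>Hyperbolic geometry near the boundary\<close>

lemma one_minus_norm_sq_le_exp:
  fixes u :: "'a::euclidean_space"
  assumes "\<zeta> > 0" "norm u < 1" "L \<le> hdist \<zeta> 0 u"
  shows "1 - (norm u)\<^sup>2 \<le> 4 * exp (- \<zeta> * L)"
proof -
  define q where "q = 1 - (norm u)\<^sup>2"
  have q: "0 < q" using assms(2) unfolding q_def by (simp add: abs_square_less_1)
  define A where "A = 1 + 2 * (norm u)\<^sup>2 / q"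
  have A: "A \<ge> 1" unfolding A_def using q by simp
  have "\<zeta> * L \<le> arcosh A"
    using assms(1,3) unfolding hdist_def A_def q_def by (simp add: field_simps)
  then have "exp (\<zeta> * L) \<le> exp (arcosh A)" by simp
  also have "\<dots> \<le> 2 * cosh (arcosh A)" by (simp add: cosh_field_def)
  also have "\<dots> = 2 * A" using A by simp
  finally have "exp (\<zeta> * L) * q \<le> 2 * A * q" using q by simp
  also have "\<dots> = 2 * (1 + (norm u)\<^sup>2)" unfolding A_def q_def using q by (simp add: field_simps q_def)
  also have "\<dots> \<le> 4" using assms(2) by (simp add: abs_square_le_1 less_imp_le)
  finally show ?thesis unfolding q_def by (simp add: exp_minus field_simps)
qed

lemma norm_sgn_minus_self_le:
  fixes u :: "'a::real_normed_vector"
  assumes "norm u \<le> 1"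
  shows "norm (sgn u - u) \<le> 1 - (norm u)\<^sup>2"
proof (cases "u = 0")
  case False
  have "sgn u - u = (1 / norm u - 1) *\<^sub>R u" by (simp add: sgn_div_norm algebra_simps divide_inverse)
  then have "norm (sgn u - u) = 1 - norm u" using False assms by (simp add: field_simps)
  also have "\<dots> \<le> 1 - (norm u)\<^sup>2" using assms by (simp add: power2_eq_square mult_left_le)
  finally show ?thesis .
qed simp

lemma norm_diff_sq_le_exp_hdist:
  fixes u v :: "'a::euclidean_space"
  assumes "\<zeta> > 0" "norm u < 1" "norm v < 1" "hdist \<zeta> u v \<le> R"
  shows "2 * (norm (u - v))\<^sup>2 \<le> exp (\<zeta> * R) * ((1 - (norm u)\<^sup>2) * (1 - (norm v)\<^sup>2))"
proof -
  define q where "q = (1 - (norm u)\<^sup>2) * (1 - (norm v)\<^sup>2)"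
  have q: "q > 0" using assms(2,3) unfolding q_def by (simp add: abs_square_less_1)
  define X where "X = 1 + 2 * (norm (u - v))\<^sup>2 / q"
  have X: "X \<ge> 1" unfolding X_def using q by simp
  have "arcosh X \<le> \<zeta> * R" using assms(1,4) unfolding hdist_def X_def q_def by (simp add: field_simps)
  moreover have "arcosh X \<ge> 0" using X by simp
  ultimately have "cosh (arcosh X) \<le> cosh (\<zeta> * R)" by (subst cosh_real_nonneg_le_iff) auto
  also have "\<dots> \<le> exp (\<zeta> * R)" using \<open>arcosh X \<ge> 0\<close> \<open>arcosh X \<le> \<zeta> * R\<close>
    by (simp add: cosh_field_def)
  finally have "2 * (norm (u - v))\<^sup>2 / q \<le> exp (\<zeta> * R)" using X unfolding X_def by simp
  then show ?thesis using q unfolding q_def[symmetric] by (simp add: field_simps)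
qed

text \<open>Both points are within O(e^{-\<zeta>(1-\<gamma>)R}) of the boundary sphere, so the bound on
  their hyperbolic distance yields a chordal distance O(e^{\<zeta>R/2} e^{-\<zeta>(1-\<gamma>)R}).\<close>
lemma norm_sgn_diff_le_if_hdist_le:
  fixes u v :: "'a::euclidean_space"
  assumes \<zeta>: "\<zeta> > 0" and u: "norm u < 1" and v: "norm v < 1" and uv: "hdist \<zeta> u v \<le> R"
    and tu: "tcoord \<zeta> R u \<le> \<gamma> * R" and tv: "tcoord \<zeta> R v \<le> \<gamma> * R"
    and \<gamma>: "\<gamma> < 1/2" and R: "R > 0"
  shows "norm (sgn u - sgn v) \<le> 11 * exp (- \<zeta> * (1 - 2 * \<gamma>) * R / 2)"
proof -
  define e where "e = exp (- \<zeta> * (1 - 2 * \<gamma>) * R / 2)"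
  define f where "f = exp (- \<zeta> * ((1 - \<gamma>) * R))"
  have e: "e > 0" and f: "f > 0" unfolding e_def f_def by simp_all
  have fe: "f \<le> e" and f2: "exp (\<zeta> * R) * (f * f) = e * e"
    unfolding e_def f_def using \<zeta> \<gamma> R
    by (simp_all add: mult_left_mono mult_right_mono exp_add[symmetric] algebra_simps)
  have qu: "1 - (norm u)\<^sup>2 \<le> 4 * f" and qv: "1 - (norm v)\<^sup>2 \<le> 4 * f"
    using one_minus_norm_sq_le_exp[OF \<zeta> u, of "(1 - \<gamma>) * R"]
      one_minus_norm_sq_le_exp[OF \<zeta> v, of "(1 - \<gamma>) * R"] tu tv
    unfolding tcoord_def f_def by (simp_all add: algebra_simps)
  have "(1 - (norm u)\<^sup>2) * (1 - (norm v)\<^sup>2) \<le> (4 * f) * (4 * f)"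
    using qu qv u v f by (intro mult_mono) (auto simp: abs_square_le_1 less_imp_le)
  then have "exp (\<zeta> * R) * ((1 - (norm u)\<^sup>2) * (1 - (norm v)\<^sup>2)) \<le> exp (\<zeta> * R) * (16 * (f * f))"
    by (simp add: mult_left_mono)
  also have "\<dots> = 16 * (e * e)" using f2 by simp
  finally have "exp (\<zeta> * R) * ((1 - (norm u)\<^sup>2) * (1 - (norm v)\<^sup>2)) \<le> 16 * (e * e)" .
  with norm_diff_sq_le_exp_hdist[OF \<zeta> u v uv] have "2 * (norm (u - v))\<^sup>2 \<le> 16 * (e * e)"
    by linarith
  then have "(norm (u - v))\<^sup>2 \<le> (3 * e)\<^sup>2" using mult_pos_pos[OF e e] by (simp add: power2_eq_square)
  then have uv': "norm (u - v) \<le> 3 * e" by (rule power2_le_imp_le) (use e in simp)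
  have "norm (sgn u - u) \<le> 4 * e" "norm (v - sgn v) \<le> 4 * e"
    using norm_sgn_minus_self_le[of u] norm_sgn_minus_self_le[of v] u v qu qv fe
    by (simp_all add: norm_minus_commute)
  then have "norm (sgn u - sgn v) \<le> 4 * e + 3 * e + 4 * e"
    using uv' by (meson norm_diff_triangle_le)
  then show ?thesis unfolding e_def by simp
qed

lemma norm_diff_le_relpow:
  fixes p :: "'b \<Rightarrow> 'a::real_normed_vector"
  assumes "\<And>i j. (i, j) \<in> S \<Longrightarrow> norm (p i - p j) \<le> d" and "(a, b) \<in> S ^^ l"
  shows "norm (p a - p b) \<le> real l * d"
  using assms(2)
proof (induction l arbitrary: b)
  case (Suc l)
  then obtain c where "(a, c) \<in> S ^^ l" "(c, b) \<in> S" by auto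
  then have "norm (p a - p b) \<le> real l * d + d"
    using Suc.IH assms(1) by (meson norm_diff_triangle_le)
  then show ?case by (simp add: algebra_simps)
qed simp

lemma is_tree_norm_diff_le:
  fixes p :: "nat \<Rightarrow> 'a::real_normed_vector"
  assumes tree: "is_tree k E" and edge: "\<And>i j. (i, j) \<in> E \<Longrightarrow> norm (p i - p j) \<le> d"
    and "d \<ge> 0" "i < k" "j < k"
  shows "norm (p i - p j) \<le> 4 * real k * d"
proof -
  define S where "S = E \<union> E\<inverse>"
  have "E \<subseteq> {..<k} \<times> {..<k}" using tree unfolding is_tree_def by auto
  then have "finite E" by (rule finite_subset) simp
  then have "finite S" unfolding S_def by simp
  have "card S \<le> 2 * (k - 1)"
    using card_Un_le[of E "E\<inverse>"] tree unfolding S_def is_tree_def by (simp add: card_inverse)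
  have dist_root: "norm (p 0 - p i) \<le> real (2 * (k - 1)) * d" if "i < k" for i
  proof -
    have "(0, i) \<in> S\<^sup>*" using tree that unfolding is_tree_def S_def by auto
    then obtain l where l: "l \<le> card S" "(0, i) \<in> S ^^ l"
      using rtrancl_finite_eq_relpow[OF \<open>finite S\<close>] by auto
    have "norm (p 0 - p i) \<le> real l * d"
      by (rule norm_diff_le_relpow[OF _ l(2)])
        (use edge in \<open>auto simp: S_def, metis norm_minus_commute\<close>)
    also have "\<dots> \<le> real (2 * (k - 1)) * d"
      using l(1) \<open>card S \<le> 2 * (k - 1)\<close> \<open>d \<ge> 0\<close> by (intro mult_right_mono) auto
    finally show ?thesis .
  qed
  have "norm (p i - p j) \<le> real (2 * (k - 1)) * d + real (2 * (k - 1)) * d"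
    using dist_root[OF \<open>i < k\<close>] dist_root[OF \<open>j < k\<close>]
    by (metis norm_diff_triangle_le norm_minus_commute)
  also have "\<dots> = 4 * real (k - 1) * d" by simp
  also have "\<dots> \<le> 4 * real k * d" using \<open>d \<ge> 0\<close> by (intro mult_right_mono) auto
  finally show ?thesis .
qed

text \<open>Along each edge of a sub-tree the direction moves by at most 11 e^{-\<zeta>(1-2\<gamma>)R/2}, so no
  sub-tree contains two points whose directions are further apart than 4k times that.\<close>
lemma D2_eq_0_if_directions_far:
  fixes xs :: "'a::euclidean_space list"
  assumes tree: "is_tree k E" and \<zeta>: "\<zeta> > 0" and \<gamma>: "\<gamma> < 1/2" and R: "R > 0"
    and in_ball: "\<forall>w\<in>set xs. norm w < 1" "norm x < 1" "norm y < 1"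
    and far: "norm (sgn x - sgn y) > 44 * real k * exp (- \<zeta> * (1 - 2 * \<gamma>) * R / 2)"
  shows "D2 \<zeta> R \<gamma> k E xs x y = 0"
proof (rule D2_eq_0_if_no_tuple_uses_both)
  show E: "E \<subseteq> {..<k} \<times> {..<k}" using tree unfolding is_tree_def by auto
  show "\<forall>f\<in>subtree_tuples \<zeta> R \<gamma> k E (xs @ [x, y]). length xs \<notin> f ` {..<k} \<or> Suc (length xs) \<notin> f ` {..<k}"
  proof (rule ballI, rule ccontr)
    fix f assume f: "f \<in> subtree_tuples \<zeta> R \<gamma> k E (xs @ [x, y])"
      and "\<not> (length xs \<notin> f ` {..<k} \<or> Suc (length xs) \<notin> f ` {..<k})"
    then obtain i j where ij: "i < k" "j < k" "f i = length xs" "f j = Suc (length xs)" by auto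
    define ys where "ys = xs @ [x, y]"
    have f_pts: "norm (ys ! f i) < 1" "tcoord \<zeta> R (ys ! f i) \<le> \<gamma> * R" if "i < k" for i
    proof -
      have "f i < length ys" using f that unfolding subtree_tuples_def ys_def by auto
      then have "ys ! f i \<in> set ys" by (rule nth_mem)
      then show "norm (ys ! f i) < 1" using in_ball unfolding ys_def by auto
      show "tcoord \<zeta> R (ys ! f i) \<le> \<gamma> * R" using f that unfolding subtree_tuples_def ys_def by auto
    qed
    have "norm (sgn (ys ! f i) - sgn (ys ! f j)) \<le> 4 * real k * (11 * exp (- \<zeta> * (1 - 2 * \<gamma>) * R / 2))"
    proof (rule is_tree_norm_diff_le[OF tree _ _ ij(1,2)])
      fix i' j' assume e: "(i', j') \<in> E"
      then have "hdist \<zeta> (ys ! f i') (ys ! f j') \<le> R" using f unfolding subtree_tuples_def ys_def by auto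
      with e E show "norm (sgn (ys ! f i') - sgn (ys ! f j')) \<le> 11 * exp (- \<zeta> * (1 - 2 * \<gamma>) * R / 2)"
        using norm_sgn_diff_le_if_hdist_le[OF \<zeta> f_pts(1) f_pts(1) _ f_pts(2) f_pts(2) \<gamma> R] by blast
    qed simp
    with far ij show False by (simp add: ys_def nth_append)
  qed
qed

section \<open>The point process\<close>

lemma (in pair_sigma_finite) AE_pair_measure_fst_snd:
  assumes [measurable]: "Measurable.pred M1 P" "Measurable.pred M2 Q"
    and "AE x in M1. P x" "AE y in M2. Q y"
  shows "AE u in M1 \<Otimes>\<^sub>M M2. P (fst u) \<and> Q (snd u)"
proof (rule AE_pair_measure)
  show "{u \<in> space (M1 \<Otimes>\<^sub>M M2). P (fst u) \<and> Q (snd u)} \<in> sets (M1 \<Otimes>\<^sub>M M2)"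
    by measurable
  show "AE x in M1. AE y in M2. P (fst (x, y)) \<and> Q (snd (x, y))"
    using assms(3) by eventually_elim (use assms(4) in \<open>auto elim: AE_mp\<close>)
qed

lemma borel_measurable_rho_bar [measurable]: "rho_bar d \<alpha> R \<in> borel_measurable borel"
proof -
  have [measurable]: "(\<lambda>t. sinh (\<alpha> * (R - t)) ^ (d - 1)) \<in> borel_measurable borel"
    by (intro borel_measurable_continuous_onI continuous_intros)
  show ?thesis unfolding rho_bar_def by measurable
qed

lemma rho_bar_nonneg:
  assumes "\<alpha> > 0"
  shows "rho_bar d \<alpha> R t \<ge> 0"
proof -
  have "integral {0..R} (\<lambda>s. sinh (\<alpha> * s) ^ (d - 1)) \<ge> 0"
    using assms by (intro integral_nonneg integrable_continuous_interval) (auto intro!: continuous_intros)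
  then show ?thesis using assms unfolding rho_bar_def by (simp add: indicator_def)
qed

lemma nn_integral_rho_bar_le_1:
  assumes "\<alpha> > 0"
  shows "(\<integral>\<^sup>+t. ennreal (rho_bar d \<alpha> R t) \<partial>lborel) \<le> 1"
proof -
  define g where "g = (\<lambda>s. sinh (\<alpha> * s) ^ (d - 1))"
  define I where "I = integral {0..R} g"
  have "continuous_on {0..R} g" unfolding g_def by (auto intro!: continuous_intros)
  then have g_int: "(g has_integral I) {0..R}" unfolding I_def
    by (rule integrable_integral[OF integrable_continuous_interval])
  have g_nonneg: "s \<ge> 0 \<Longrightarrow> g s \<ge> 0" for s unfolding g_def using assms by simp
  show ?thesis
  proof (cases "I > 0")
    case False
    then have "I = 0" using has_integral_nonneg[OF g_int] g_nonneg by fastforce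
    then have "rho_bar d \<alpha> R t = 0" for t unfolding rho_bar_def I_def g_def by simp
    then show ?thesis by simp
  next
    case True
    have "(\<integral>\<^sup>+t. ennreal (rho_bar d \<alpha> R t) \<partial>lborel) = (\<integral>\<^sup>+s. ennreal (rho_bar d \<alpha> R (R - s)) \<partial>lborel)"
      using nn_integral_real_affine[where c="-1" and t=R and f="\<lambda>t. ennreal (rho_bar d \<alpha> R t)"] by simp
    also have "\<dots> = (\<integral>\<^sup>+s. ennreal (g s / I) * indicator {0..R} s \<partial>lborel)"
      by (intro nn_integral_cong) (auto simp: rho_bar_def g_def I_def indicator_def)
    also have "\<dots> = ennreal (I / I)"
      using g_nonneg True by (intro nn_integral_has_integral_lebesgue' has_integral_divide g_int) auto
    finally show ?thesis using True by simp
  qed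
qed

lemma emeasure_density_le_rho_bar:
  assumes "\<alpha> > 0" "g \<in> borel_measurable borel" "\<And>t. g t \<le> rho_bar d \<alpha> R t"
  shows "emeasure (density lborel (\<lambda>t. ennreal (g t))) UNIV \<le> 1"
proof -
  have "emeasure (density lborel (\<lambda>t. ennreal (g t))) UNIV \<le> (\<integral>\<^sup>+t. ennreal (rho_bar d \<alpha> R t) \<partial>lborel)"
    using assms(2,3) by (simp add: emeasure_density nn_integral_mono ennreal_leI)
  also have "\<dots> \<le> 1" using nn_integral_rho_bar_le_1[OF assms(1)] .
  finally show ?thesis .
qed

lemma finite_measure_density_le_rho_bar:
  assumes "\<alpha> > 0" "g \<in> borel_measurable borel" "\<And>t. g t \<le> rho_bar d \<alpha> R t"
  shows "finite_measure (density lborel (\<lambda>t. ennreal (g t)))"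
  by (rule finite_measureI)
    (use neq_top_trans[OF ennreal_one_neq_top emeasure_density_le_rho_bar[OF assms]] in simp)

lemma sets_sphere_unif [measurable_cong, simp]: "sets (sphere_unif :: 'a::euclidean_space measure) = sets borel"
  unfolding sphere_unif_def by simp

lemma space_sphere_unif [simp]: "space (sphere_unif :: 'a::euclidean_space measure) = UNIV"
  unfolding sphere_unif_def by simp

lemma emeasure_sphere_unif_UNIV: "emeasure (sphere_unif :: 'a::euclidean_space measure) UNIV = 1"
proof -
  have "emeasure lborel (ball (0::'a) 1) \<noteq> 0"
    by (simp add: emeasure_ball unit_ball_vol_pos less_imp_neq[symmetric])
  then show ?thesis unfolding sphere_unif_def
    by (simp add: emeasure_distr emeasure_uniform_measure emeasure_ball ennreal_divide_self)
qed

lemma finite_measure_sphere_unif: "finite_measure (sphere_unif :: 'a::euclidean_space measure)"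
  by (rule finite_measureI) (simp add: emeasure_sphere_unif_UNIV)

lemma AE_sphere_unif_norm_le_1: "AE \<theta> in (sphere_unif :: 'a::euclidean_space measure). norm \<theta> \<le> 1"
  unfolding sphere_unif_def by (subst AE_distr_iff) (auto simp: norm_sgn)

lemma sgn_cap_subset_cballs:
  fixes w \<theta>0 :: "'a::real_normed_vector"
  assumes w: "norm w < 1" and cap: "norm (sgn w - \<theta>0) \<le> \<delta>" and \<delta>: "\<delta> > 0" and \<theta>0: "norm \<theta>0 \<le> 2"
  shows "w \<in> (\<Union>i\<le>nat \<lfloor>1 / \<delta>\<rfloor>. cball ((real i * \<delta>) *\<^sub>R \<theta>0) (3 * \<delta>))"
proof -
  define s where "s = norm w"
  define i where "i = nat \<lfloor>s / \<delta>\<rfloor>"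
  have s: "0 \<le> s" "s < 1" using w unfolding s_def by auto
  have "real i \<le> s / \<delta>" "s / \<delta> < real i + 1"
    unfolding i_def using s \<delta> by (auto simp: of_nat_nat)
  then have i: "real i * \<delta> \<le> s" "s - real i * \<delta> < \<delta>" using \<delta> by (auto simp: field_simps)
  have i_le: "i \<le> nat \<lfloor>1 / \<delta>\<rfloor>"
    unfolding i_def using s \<delta> by (intro nat_mono floor_mono) (auto simp: divide_right_mono)
  have "w - (real i * \<delta>) *\<^sub>R \<theta>0 = s *\<^sub>R (sgn w - \<theta>0) + (s - real i * \<delta>) *\<^sub>R \<theta>0"
    unfolding s_def by (cases "w = 0") (auto simp: algebra_simps sgn_div_norm)
  then have "norm (w - (real i * \<delta>) *\<^sub>R \<theta>0) \<le> s * norm (sgn w - \<theta>0) + (s - real i * \<delta>) * norm \<theta>0"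
    using s i by (metis norm_triangle_ineq norm_scaleR abs_of_nonneg diff_ge_0_iff_ge)
  also have "\<dots> \<le> 1 * \<delta> + \<delta> * 2"
    using s i cap \<theta>0 by (intro add_mono mult_mono) auto
  finally show ?thesis using i_le by (auto simp: dist_norm norm_minus_commute)
qed

text \<open>The cone over a cap of radius \<delta>, cut off by the unit ball, is covered by about 1/\<delta> balls
  of radius 3\<delta> along its axis; this gives the exponent d - 1 of the cap bound.\<close>
lemma emeasure_sphere_cap_le_cballs:
  fixes \<theta>0 :: "'a::euclidean_space"
  assumes \<delta>: "\<delta> > 0" and \<theta>0: "norm \<theta>0 \<le> 2"
  shows "emeasure (sphere_unif :: 'a measure) {\<theta>. norm (sgn \<theta> - \<theta>0) \<le> \<delta>}
           \<le> ennreal (real (Suc (nat \<lfloor>1 / \<delta>\<rfloor>)) * (3 * \<delta>) ^ DIM('a))"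
proof -
  define N where "N = nat \<lfloor>1 / \<delta>\<rfloor>"
  define V where "V = unit_ball_vol (real DIM('a))"
  define C where "C = {\<theta>::'a. norm (sgn \<theta> - \<theta>0) \<le> \<delta>}"
  have V: "V > 0" unfolding V_def by (simp add: unit_ball_vol_pos)
  have C: "C \<in> sets borel" unfolding C_def by measurable
  have sgn_sgn: "sgn (sgn w) = sgn w" for w :: 'a
    by (cases "w = 0") (simp_all add: sgn_div_norm[of "sgn w"] norm_sgn)
  have "emeasure (sphere_unif :: 'a measure) C = emeasure lborel (ball 0 1 \<inter> sgn -` C) / ennreal V"
    unfolding sphere_unif_def V_def using C
    by (simp add: emeasure_distr emeasure_uniform_measure emeasure_ball
        measurable_sets_borel[OF borel_measurable_sgn])
  also have "\<dots> \<le> emeasure lborel (\<Union>i\<le>N. cball ((real i * \<delta>) *\<^sub>R \<theta>0) (3 * \<delta>)) / ennreal V"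
    using sgn_cap_subset_cballs[OF _ _ \<delta> \<theta>0] sgn_sgn unfolding C_def N_def
    by (intro divide_right_mono_ennreal emeasure_mono) (auto intro: sets.finite_UN)
  also have "\<dots> \<le> (\<Sum>i\<le>N. emeasure lborel (cball ((real i * \<delta>) *\<^sub>R \<theta>0) (3 * \<delta>))) / ennreal V"
    by (intro divide_right_mono_ennreal emeasure_subadditive_finite) (auto simp del: sets_lborel)
  also have "\<dots> = ennreal (real (Suc N) * (V * (3 * \<delta>) ^ DIM('a))) / ennreal V"
    using \<delta> by (simp add: emeasure_cball V_def ennreal_of_nat_eq_real_of_nat ennreal_mult)
  also have "\<dots> = ennreal (real (Suc N) * (3 * \<delta>) ^ DIM('a))"
    using V \<delta> by (subst divide_ennreal) auto
  finally show ?thesis unfolding C_def N_def .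
qed

definition sphere_cap_bound :: "nat \<Rightarrow> real \<Rightarrow> real" where
  "sphere_cap_bound d \<delta> = 2 * 3 ^ d * \<delta> ^ (d - 1)"

lemma emeasure_sphere_cap_le:
  fixes \<theta>0 :: "'a::euclidean_space"
  assumes \<delta>: "\<delta> > 0"
  shows "emeasure (sphere_unif :: 'a measure) {\<theta>. norm (sgn \<theta> - \<theta>0) \<le> \<delta>}
           \<le> ennreal (sphere_cap_bound DIM('a) \<delta>)"
proof -
  define d where "d = DIM('a)"
  have d: "\<delta> ^ d = \<delta> * \<delta> ^ (d - 1)" unfolding d_def by (simp add: power_eq_if)
  consider "\<delta> \<ge> 1" | "\<delta> < 1" "norm \<theta>0 > 2" | "\<delta> < 1" "norm \<theta>0 \<le> 2" by linarith
  then show ?thesis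
  proof cases
    case 1
    then have "1 * 1 \<le> 3 ^ d * \<delta> ^ (d - 1)" by (intro mult_mono) auto
    then have "(1::ennreal) \<le> ennreal (sphere_cap_bound d \<delta>)"
      unfolding sphere_cap_bound_def by (simp add: ennreal_leI flip: ennreal_1)
    moreover have "emeasure (sphere_unif :: 'a measure) {\<theta>. norm (sgn \<theta> - \<theta>0) \<le> \<delta>} \<le> 1"
      using emeasure_mono[of _ UNIV sphere_unif] by (simp add: emeasure_sphere_unif_UNIV)
    ultimately show ?thesis unfolding d_def by order
  next
    case 2
    have "norm \<theta>0 - norm (sgn \<theta>) \<le> norm (sgn \<theta> - \<theta>0)" for \<theta> :: 'a
      using norm_triangle_ineq2[of \<theta>0 "sgn \<theta>"] by (simp add: norm_minus_commute)
    then have "{\<theta>::'a. norm (sgn \<theta> - \<theta>0) \<le> \<delta>} = {}"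
      using 2 norm_sgn by (smt (verit, best) Collect_empty_eq)
    then show ?thesis by simp
  next
    case 3
    have "real (nat \<lfloor>1 / \<delta>\<rfloor>) \<le> 1 / \<delta>" using \<delta> by (simp add: of_nat_nat)
    moreover have "1 \<le> 1 / \<delta>" using \<delta> 3 by simp
    ultimately have "real (Suc (nat \<lfloor>1 / \<delta>\<rfloor>)) \<le> 1 / \<delta> + 1 / \<delta>" by simp
    then have "real (Suc (nat \<lfloor>1 / \<delta>\<rfloor>)) \<le> 2 / \<delta>" by simp
    then have "real (Suc (nat \<lfloor>1 / \<delta>\<rfloor>)) * (3 * \<delta>) ^ d \<le> (2 / \<delta>) * (3 * \<delta>) ^ d"
      using \<delta> by (intro mult_right_mono) auto
    also have "\<dots> = sphere_cap_bound d \<delta>"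
      unfolding sphere_cap_bound_def using \<delta> d by (simp add: power_mult_distrib field_simps)
    finally show ?thesis
      using emeasure_sphere_cap_le_cballs[OF \<delta> 3(2)] unfolding d_def by (meson ennreal_leI order_trans)
  qed
qed

lemma borel_measurable_polar_pt [measurable]:
  assumes [measurable_cong]: "sets M = sets (borel :: real measure)" "sets N = sets (borel :: 'a::euclidean_space measure)"
  shows "polar_pt \<zeta> R \<in> borel_measurable (M \<Otimes>\<^sub>M N)"
proof -
  have [measurable]: "(\<lambda>t::real. tanh (\<zeta> * (R - t) / 2)) \<in> borel_measurable borel"
    by (intro borel_measurable_continuous_onI continuous_on_tanh continuous_intros)
      (auto simp: cosh_real_pos[THEN less_imp_neq, symmetric])
  show ?thesis unfolding polar_pt_def by measurable
qed

lemma norm_polar_pt_less_1: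
  assumes "norm (snd u) \<le> 1"
  shows "norm (polar_pt \<zeta> R u) < 1"
proof -
  have "norm (polar_pt \<zeta> R u) = \<bar>tanh (\<zeta> * (R - fst u) / 2)\<bar> * norm (snd u)"
    unfolding polar_pt_def by simp
  also have "\<dots> \<le> \<bar>tanh (\<zeta> * (R - fst u) / 2)\<bar>" using assms by (intro mult_left_le) auto
  also have "\<dots> < 1" using tanh_real_lt_1 tanh_real_gt_neg1 by (simp add: abs_less_iff)
  finally show ?thesis .
qed

lemma sgn_polar_pt:
  assumes "\<zeta> > 0" "fst u < R"
  shows "sgn (polar_pt \<zeta> R u) = sgn (snd u)"
proof -
  have "tanh (\<zeta> * (R - fst u) / 2) > 0" using assms by simp
  then show ?thesis unfolding polar_pt_def by (simp add: sgn_scaleR)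
qed

lemma sets_point_law [measurable_cong, simp]: "sets (point_law \<zeta> \<alpha> R :: 'a::euclidean_space measure) = sets borel"
  unfolding point_law_def by simp

lemma space_point_law [simp]: "space (point_law \<zeta> \<alpha> R :: 'a::euclidean_space measure) = UNIV"
  unfolding point_law_def by simp

lemma
  assumes "\<alpha> > 0"
  shows emeasure_point_law_UNIV_le_1: "emeasure (point_law \<zeta> \<alpha> R :: 'a::euclidean_space measure) UNIV \<le> 1"
    and AE_point_law_norm_less_1: "AE x in (point_law \<zeta> \<alpha> R :: 'a measure). norm x < 1"
proof -
  let ?D = "density lborel (\<lambda>t. ennreal (rho_bar DIM('a) \<alpha> R t))"
  interpret D: finite_measure ?D by (rule finite_measure_density_le_rho_bar[OF assms]) auto
  interpret S: finite_measure "sphere_unif :: 'a measure" by (rule finite_measure_sphere_unif)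
  interpret pair_sigma_finite ?D "sphere_unif :: 'a measure" ..
  have "emeasure (point_law \<zeta> \<alpha> R :: 'a measure) UNIV = emeasure ?D UNIV * emeasure sphere_unif (UNIV :: 'a set)"
    unfolding point_law_def
    by (subst emeasure_distr) (auto simp: S.emeasure_pair_measure_Times simp flip: UNIV_Times_UNIV)
  then show "emeasure (point_law \<zeta> \<alpha> R :: 'a measure) UNIV \<le> 1"
    using emeasure_density_le_rho_bar[OF assms, of "rho_bar DIM('a) \<alpha> R" "DIM('a)" R]
    by (simp add: emeasure_sphere_unif_UNIV)
  have "AE u in ?D \<Otimes>\<^sub>M (sphere_unif :: 'a measure). True \<and> norm (snd u) \<le> 1"
    by (rule AE_pair_measure_fst_snd) (auto simp: AE_sphere_unif_norm_le_1)
  then show "AE x in (point_law \<zeta> \<alpha> R :: 'a measure). norm x < 1"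
    unfolding point_law_def by (subst AE_distr_iff) (auto elim!: AE_mp intro: norm_polar_pt_less_1)
qed

lemma finite_measure_point_law: "\<alpha> > 0 \<Longrightarrow> finite_measure (point_law \<zeta> \<alpha> R :: 'a::euclidean_space measure)"
  by (rule finite_measureI)
    (use neq_top_trans[OF ennreal_one_neq_top emeasure_point_law_UNIV_le_1] in simp)

lemma emeasure_point_law_outside_ball:
  assumes "\<alpha> > 0"
  shows "emeasure (point_law \<zeta> \<alpha> R :: 'a::euclidean_space measure) {x. 1 \<le> norm x} = 0"
  using AE_point_law_norm_less_1[OF assms, of \<zeta> R, where 'a='a]
  by (subst (asm) AE_iff_measurable[OF _ refl]) (auto simp: not_less)

lemma emeasure_PiM_point_law_le_1:
  fixes m :: nat
  assumes "\<alpha> > 0"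
  shows "emeasure (PiM {..<m} (\<lambda>_. point_law \<zeta> \<alpha> R :: 'a::euclidean_space measure)) A \<le> 1"
proof (cases "A \<in> sets (PiM {..<m} (\<lambda>_. point_law \<zeta> \<alpha> R :: 'a measure))")
  case True
  let ?P = "PiM {..<m} (\<lambda>_. point_law \<zeta> \<alpha> R :: 'a measure)"
  interpret finite_measure "point_law \<zeta> \<alpha> R :: 'a measure" by (rule finite_measure_point_law[OF assms])
  interpret product_sigma_finite "\<lambda>_::nat. point_law \<zeta> \<alpha> R :: 'a measure" by unfold_locales
  have "emeasure ?P A \<le> emeasure ?P (\<Pi>\<^sub>E i\<in>{..<m}. UNIV)"
    using emeasure_space[of ?P A] by (simp add: space_PiM)
  also have "\<dots> = (\<Prod>i<m. emeasure (point_law \<zeta> \<alpha> R :: 'a measure) UNIV)"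
    by (rule emeasure_PiM) auto
  also have "\<dots> \<le> 1" using emeasure_point_law_UNIV_le_1[OF assms] by (intro prod_le_1) auto
  finally show ?thesis .
qed (simp add: emeasure_notin_sets)

lemma emeasure_PiM_point_law_outside_ball:
  fixes m :: nat
  assumes "\<alpha> > 0"
  shows "emeasure (PiM {..<m} (\<lambda>_. point_law \<zeta> \<alpha> R :: 'a::euclidean_space measure))
           {\<omega> \<in> space (PiM {..<m} (\<lambda>_. point_law \<zeta> \<alpha> R)). \<exists>i<m. 1 \<le> norm (\<omega> i)} = 0"
proof -
  let ?P = "PiM {..<m} (\<lambda>_. point_law \<zeta> \<alpha> R :: 'a measure)"
  interpret finite_measure "point_law \<zeta> \<alpha> R :: 'a measure" by (rule finite_measure_point_law[OF assms])
  interpret product_sigma_finite "\<lambda>_::nat. point_law \<zeta> \<alpha> R :: 'a measure" by unfold_locales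
  define B where "B i = (\<Pi>\<^sub>E j\<in>{..<m}. if j = i then {x::'a. 1 \<le> norm x} else UNIV)" for i
  have B: "B i \<in> sets ?P" for i unfolding B_def by (rule sets_PiM_I_finite) auto
  have "\<omega> \<in> B i \<longleftrightarrow> \<omega> \<in> space ?P \<and> 1 \<le> norm (\<omega> i)" if "i < m" for \<omega> i
    using that unfolding B_def space_PiM by (auto simp: PiE_iff)
  then have eq: "{\<omega> \<in> space ?P. \<exists>i<m. 1 \<le> norm (\<omega> i)} = (\<Union>i<m. B i)" by blast
  have "emeasure ?P (\<Union>i<m. B i) \<le> (\<Sum>i<m. emeasure ?P (B i))"
    by (rule emeasure_subadditive_finite) (auto intro: B)
  also have "\<dots> = 0"
  proof (intro sum.neutral ballI)
    fix i assume "i \<in> {..<m}"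
    have "emeasure ?P (B i) = (\<Prod>j<m. emeasure (point_law \<zeta> \<alpha> R :: 'a measure) (if j = i then {x. 1 \<le> norm x} else UNIV))"
      unfolding B_def by (rule emeasure_PiM) auto
    also have "\<dots> = 0" using \<open>i \<in> {..<m}\<close> emeasure_point_law_outside_ball[OF assms]
      by (intro prod_zero bexI[of _ i]) auto
    finally show "emeasure ?P (B i) = 0" .
  qed
  finally show ?thesis unfolding eq by simp
qed

lemma poisson_weights_sums: "(\<lambda>m. l ^ m / fact m * exp (- l)) sums (1::real)"
proof -
  have "(\<lambda>m. l ^ m / fact m * exp (- l)) sums (exp l * exp (- l))"
    using exp_converges[of l] by (intro sums_mult2) (simp add: divide_inverse_commute scaleR_conv_of_real)
  then show ?thesis by (simp add: exp_minus)
qed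

lemma
  assumes "\<alpha> > 0" "l \<ge> 0"
  shows ppp_prob_nonneg: "0 \<le> ppp_prob l (point_law \<zeta> \<alpha> R :: 'a::euclidean_space measure) P"
    and ppp_prob_le_1: "ppp_prob l (point_law \<zeta> \<alpha> R :: 'a measure) P \<le> 1"
proof -
  define p where "p m = measure (PiM {..<m} (\<lambda>_. point_law \<zeta> \<alpha> R :: 'a measure))
    {\<omega> \<in> space (PiM {..<m} (\<lambda>_. point_law \<zeta> \<alpha> R)). P (map \<omega> [0..<m])}" for m
  define w where "w m = l ^ m / fact m * exp (- l)" for m
  have p: "0 \<le> p m" "p m \<le> 1" for m
  proof -
    show "0 \<le> p m" unfolding p_def by simp
    show "p m \<le> 1" unfolding p_def measure_def
      by (rule enn2real_leI) (use emeasure_PiM_point_law_le_1[OF assms(1)] in simp_all)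
  qed
  have w: "summable w" "suminf w = 1"
    using poisson_weights_sums[of l] unfolding w_def by (auto simp: sums_iff)
  have "0 \<le> w m" for m unfolding w_def using assms(2) by simp
  then have wp: "0 \<le> w m * p m" "w m * p m \<le> w m" for m
    using p by (auto intro: mult_left_le)
  have "summable (\<lambda>m. w m * p m)"
    by (rule summable_comparison_test'[OF w(1)]) (use wp in auto)
  moreover have ppp: "ppp_prob l (point_law \<zeta> \<alpha> R) P = (\<Sum>m. w m * p m)"
    unfolding ppp_prob_def w_def p_def ..
  ultimately show "0 \<le> ppp_prob l (point_law \<zeta> \<alpha> R :: 'a measure) P"
    and "ppp_prob l (point_law \<zeta> \<alpha> R :: 'a measure) P \<le> 1"
    using suminf_nonneg[of "\<lambda>m. w m * p m"] suminf_le[of "\<lambda>m. w m * p m" w] wp w by auto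
qed

lemma ppp_prob_eq_0:
  assumes "\<alpha> > 0" and "\<And>xs. \<forall>x\<in>set xs. norm x < 1 \<Longrightarrow> \<not> P xs"
  shows "ppp_prob l (point_law \<zeta> \<alpha> R :: 'a::euclidean_space measure) P = 0"
proof -
  have "emeasure (PiM {..<m} (\<lambda>_. point_law \<zeta> \<alpha> R :: 'a measure))
          {\<omega> \<in> space (PiM {..<m} (\<lambda>_. point_law \<zeta> \<alpha> R)). P (map \<omega> [0..<m])} = 0" for m
  proof -
    let ?P = "PiM {..<m} (\<lambda>_. point_law \<zeta> \<alpha> R :: 'a measure)"
    have "\<exists>i<m. 1 \<le> norm (\<omega> i)" if "P (map \<omega> [0..<m])" for \<omega>
    proof (rule ccontr)
      assume "\<not> (\<exists>i<m. 1 \<le> norm (\<omega> i))"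
      then have "\<forall>x\<in>set (map \<omega> [0..<m]). norm x < 1" by (auto simp: not_le)
      with assms(2) that show False by blast
    qed
    then have "{\<omega> \<in> space ?P. P (map \<omega> [0..<m])} \<subseteq> {\<omega> \<in> space ?P. \<exists>i<m. 1 \<le> norm (\<omega> i)}"
      by blast
    moreover have "{\<omega> \<in> space ?P. \<exists>i<m. 1 \<le> norm (\<omega> i)} \<in> sets ?P" by measurable
    ultimately have "emeasure ?P {\<omega> \<in> space ?P. P (map \<omega> [0..<m])} \<le> 0"
      by (subst emeasure_PiM_point_law_outside_ball[OF assms(1), symmetric]) (rule emeasure_mono)
    then show ?thesis by simp
  qed
  then show ?thesis unfolding ppp_prob_def measure_def by simp
qed

section \<open>The integrals\<close>

lemma sets_outer_meas [measurable_cong, simp]: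
  "sets (outer_meas \<alpha> \<gamma> R :: (real \<times> 'a::euclidean_space) measure) = sets (borel \<Otimes>\<^sub>M borel)"
  unfolding outer_meas_def by (intro sets_pair_measure_cong) auto

lemma space_outer_meas [simp]: "space (outer_meas \<alpha> \<gamma> R :: (real \<times> 'a::euclidean_space) measure) = UNIV"
  unfolding outer_meas_def by (simp add: space_pair_measure)

lemma emeasure_outer_meas_Times_le:
  assumes "\<alpha> > 0" "A \<in> sets borel" "B \<in> sets borel"
  shows "emeasure (outer_meas \<alpha> \<gamma> R :: (real \<times> 'a::euclidean_space) measure) (A \<times> B)
           \<le> emeasure (sphere_unif :: 'a measure) B"
proof -
  let ?D = "density lborel (\<lambda>t. ennreal (indicator {0..\<gamma> * R} t * rho_bar DIM('a) \<alpha> R t))"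
  interpret finite_measure "sphere_unif :: 'a measure" by (rule finite_measure_sphere_unif)
  have "emeasure ?D A \<le> emeasure ?D UNIV" using emeasure_space[of ?D A] by simp
  also have "\<dots> \<le> 1"
    by (rule emeasure_density_le_rho_bar[OF assms(1)])
      (use rho_bar_nonneg[OF assms(1)] in \<open>auto simp: indicator_def\<close>)
  finally have "emeasure ?D A \<le> 1" .
  then have "emeasure ?D A * emeasure sphere_unif B \<le> 1 * emeasure (sphere_unif :: 'a measure) B"
    by (intro mult_right_mono) auto
  then show ?thesis unfolding outer_meas_def using assms(2,3) by (simp add: emeasure_pair_measure_Times)
qed

lemma emeasure_outer_meas_UNIV_le_1:
  "\<alpha> > 0 \<Longrightarrow> emeasure (outer_meas \<alpha> \<gamma> R :: (real \<times> 'a::euclidean_space) measure) UNIV \<le> 1"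
  using emeasure_outer_meas_Times_le[of \<alpha> UNIV "UNIV :: 'a set" \<gamma> R]
  by (simp add: emeasure_sphere_unif_UNIV)

lemma finite_measure_outer_meas:
  assumes "\<alpha> > 0"
  shows "finite_measure (outer_meas \<alpha> \<gamma> R :: (real \<times> 'a::euclidean_space) measure)"
  by (rule finite_measureI)
    (use neq_top_trans[OF ennreal_one_neq_top emeasure_outer_meas_UNIV_le_1[OF assms]] in simp)

lemma AE_outer_meas:
  assumes "\<alpha> > 0"
  shows "AE u in (outer_meas \<alpha> \<gamma> R :: (real \<times> 'a::euclidean_space) measure). fst u \<le> \<gamma> * R \<and> norm (snd u) \<le> 1"
proof -
  let ?D = "density lborel (\<lambda>t. ennreal (indicator {0..\<gamma> * R} t * rho_bar DIM('a) \<alpha> R t))"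
  interpret D: finite_measure ?D
    by (rule finite_measure_density_le_rho_bar[OF assms, of _ "DIM('a)" R])
      (use rho_bar_nonneg[OF assms] in \<open>auto simp: indicator_def\<close>)
  interpret S: finite_measure "sphere_unif :: 'a measure" by (rule finite_measure_sphere_unif)
  interpret pair_sigma_finite ?D "sphere_unif :: 'a measure" ..
  have "AE t in ?D. t \<le> \<gamma> * R" by (subst AE_density) (auto simp: indicator_def)
  then show ?thesis unfolding outer_meas_def
    by (intro AE_pair_measure_fst_snd AE_sphere_unif_norm_le_1) auto
qed

lemma emeasure_outer_meas_cap_le:
  assumes "\<alpha> > 0" "\<delta> > 0"
  shows "emeasure (outer_meas \<alpha> \<gamma> R :: (real \<times> 'a::euclidean_space) measure) {u. norm (sgn (snd u) - \<theta>0) \<le> \<delta>}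
           \<le> ennreal (sphere_cap_bound DIM('a) \<delta>)"
proof -
  have "{u::real \<times> 'a. norm (sgn (snd u) - \<theta>0) \<le> \<delta>} = UNIV \<times> {\<theta>. norm (sgn \<theta> - \<theta>0) \<le> \<delta>}" by auto
  then show ?thesis
    using emeasure_outer_meas_Times_le[OF assms(1), of UNIV "{\<theta>::'a. norm (sgn \<theta> - \<theta>0) \<le> \<delta>}" \<gamma> R]
      emeasure_sphere_cap_le[OF assms(2), of "\<theta>0 :: 'a"]
    by simp
qed

lemma
  assumes "\<alpha> > 0"
  shows pD2_nonneg: "0 \<le> pD2 \<zeta> \<alpha> \<gamma> k E n R (x::'a::euclidean_space) y"
    and pD2_le_1: "pD2 \<zeta> \<alpha> \<gamma> k E n R x y \<le> 1"
  unfolding pD2_def by (rule ppp_prob_nonneg[OF assms] ppp_prob_le_1[OF assms]; simp)+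

lemma pD2_polar_pt_eq_0_if_directions_far:
  fixes u v :: "real \<times> 'a::euclidean_space"
  assumes tree: "is_tree k E" and \<zeta>: "\<zeta> > 0" and \<alpha>: "\<alpha> > 0" and \<gamma>: "\<gamma> < 1/2" and R: "R > 0"
    and u: "fst u \<le> \<gamma> * R" "norm (snd u) \<le> 1" and v: "fst v \<le> \<gamma> * R" "norm (snd v) \<le> 1"
    and far: "norm (sgn (snd u) - sgn (snd v)) > 44 * real k * exp (- \<zeta> * (1 - 2 * \<gamma>) * R / 2)"
  shows "pD2 \<zeta> \<alpha> \<gamma> k E n R (polar_pt \<zeta> R u) (polar_pt \<zeta> R v) = 0"
  unfolding pD2_def
proof (rule ppp_prob_eq_0[OF \<alpha>])
  have "\<gamma> * R < R" using \<gamma> R by simp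
  then have "fst u < R" "fst v < R" using u(1) v(1) by linarith+
  then have "norm (sgn (polar_pt \<zeta> R u) - sgn (polar_pt \<zeta> R v)) > 44 * real k * exp (- \<zeta> * (1 - 2 * \<gamma>) * R / 2)"
    using far by (simp add: sgn_polar_pt[OF \<zeta>])
  then have "D2 \<zeta> R \<gamma> k E xs (polar_pt \<zeta> R u) (polar_pt \<zeta> R v) = 0" if "\<forall>x\<in>set xs. norm x < 1" for xs
    by (rule D2_eq_0_if_directions_far[OF tree \<zeta> \<gamma> R that norm_polar_pt_less_1[OF u(2)]
          norm_polar_pt_less_1[OF v(2)]])
  then show "\<not> D2 \<zeta> R \<gamma> k E xs (polar_pt \<zeta> R u) (polar_pt \<zeta> R v) \<noteq> 0"
    if "\<forall>x\<in>set xs. norm x < 1" for xs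
    using that by blast
qed

lemma nn_integral_powr_le_emeasure:
  assumes "A \<in> sets M" "AE x in M. f x \<noteq> 0 \<longrightarrow> x \<in> A" "\<And>x. 0 \<le> f x" "\<And>x. f x \<le> 1" "p > 0"
  shows "(\<integral>\<^sup>+x. ennreal (f x powr p) \<partial>M) \<le> emeasure M A"
proof -
  have "AE x in M. ennreal (f x powr p) \<le> indicator A x"
    using assms(2)
  proof eventually_elim
    case (elim x)
    then show ?case
      using assms(3,4,5) powr_le1[of p "f x"] by (cases "f x = 0") (auto simp: ennreal_le_1)
  qed
  then have "(\<integral>\<^sup>+x. ennreal (f x powr p) \<partial>M) \<le> (\<integral>\<^sup>+x. indicator A x \<partial>M)"
    by (rule nn_integral_mono_AE)
  then show ?thesis using assms(1) by simp
qed

text \<open>Fubini over the first factor: whatever the other coordinates are, the first point must lie in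
  a spherical cap.\<close>
lemma emeasure_outer_meas_pair_cap_le:
  fixes g :: "'b \<Rightarrow> 'a::euclidean_space"
  assumes \<alpha>: "\<alpha> > 0" and \<delta>: "\<delta> > 0" and N: "finite_measure N"
    and [measurable]: "g \<in> borel_measurable N" "Measurable.pred N Q"
  shows "emeasure ((outer_meas \<alpha> \<gamma> R :: (real \<times> 'a) measure) \<Otimes>\<^sub>M N)
           {v \<in> space ((outer_meas \<alpha> \<gamma> R :: (real \<times> 'a) measure) \<Otimes>\<^sub>M N).
              norm (sgn (snd (fst v)) - g (snd v)) \<le> \<delta> \<and> Q (snd v)}
         \<le> ennreal (sphere_cap_bound DIM('a) \<delta>) * emeasure N {y \<in> space N. Q y}"
    (is "emeasure (?M \<Otimes>\<^sub>M N) ?A \<le> ?c * _")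
proof -
  interpret M: finite_measure ?M by (rule finite_measure_outer_meas[OF \<alpha>])
  interpret N: finite_measure N by (rule N)
  interpret pair_sigma_finite ?M N ..
  have "(\<lambda>x::real \<times> 'a. sgn (snd x)) \<in> borel_measurable ?M" by simp
  then have [measurable]: "(\<lambda>v. sgn (snd (fst v))) \<in> borel_measurable (?M \<Otimes>\<^sub>M N)"
    by (rule measurable_compose[OF measurable_fst, unfolded comp_def])
  have "?A \<in> sets (?M \<Otimes>\<^sub>M N)" by measurable
  then have "emeasure (?M \<Otimes>\<^sub>M N) ?A = (\<integral>\<^sup>+y. emeasure ?M ((\<lambda>x. (x, y)) -` ?A) \<partial>N)"
    by (rule emeasure_pair_measure_alt2)
  also have "\<dots> \<le> (\<integral>\<^sup>+y. ?c * indicator {y \<in> space N. Q y} y \<partial>N)"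
  proof (intro nn_integral_mono)
    fix y assume y: "y \<in> space N"
    show "emeasure ?M ((\<lambda>x. (x, y)) -` ?A) \<le> ?c * indicator {y \<in> space N. Q y} y"
    proof (cases "Q y")
      case True
      have "{x \<in> space ?M. norm (sgn (snd x) - g y) \<le> \<delta>} \<in> sets ?M" by measurable
      moreover have "(\<lambda>x. (x, y)) -` ?A \<subseteq> {x \<in> space ?M. norm (sgn (snd x) - g y) \<le> \<delta>}"
        by (auto simp: space_pair_measure)
      ultimately have "emeasure ?M ((\<lambda>x. (x, y)) -` ?A) \<le> emeasure ?M {x. norm (sgn (snd x) - g y) \<le> \<delta>}"
        by (simp add: emeasure_mono)
      also have "\<dots> \<le> ?c" by (rule emeasure_outer_meas_cap_le[OF \<alpha> \<delta>])
      finally show ?thesis using True y by simp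
    qed (auto simp: space_pair_measure)
  qed
  also have "\<dots> = ?c * emeasure N {y \<in> space N. Q y}"
    by (rule nn_integral_cmult_indicator) measurable
  finally show ?thesis .
qed

lemma emeasure_outer_meas_close_pairs_le:
  assumes \<alpha>: "\<alpha> > 0" and \<delta>: "\<delta> > 0"
  shows "emeasure ((outer_meas \<alpha> \<gamma> R :: (real \<times> 'a::euclidean_space) measure) \<Otimes>\<^sub>M outer_meas \<alpha> \<gamma> R)
           {v \<in> space (outer_meas \<alpha> \<gamma> R \<Otimes>\<^sub>M outer_meas \<alpha> \<gamma> R). norm (sgn (snd (fst v)) - sgn (snd (snd v))) \<le> \<delta>}
         \<le> ennreal (sphere_cap_bound DIM('a) \<delta>)"
proof -
  let ?M = "outer_meas \<alpha> \<gamma> R :: (real \<times> 'a) measure"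
  have "Measurable.pred ?M (\<lambda>_. True)" "(\<lambda>x. sgn (snd x)) \<in> borel_measurable ?M" by simp_all
  from emeasure_outer_meas_pair_cap_le[OF \<alpha> \<delta> finite_measure_outer_meas[OF \<alpha>] this(2,1)]
  have "emeasure (?M \<Otimes>\<^sub>M ?M) {v \<in> space (?M \<Otimes>\<^sub>M ?M). norm (sgn (snd (fst v)) - sgn (snd (snd v))) \<le> \<delta>}
      \<le> ennreal (sphere_cap_bound DIM('a) \<delta>) * emeasure ?M UNIV"
    by simp
  also have "\<dots> \<le> ennreal (sphere_cap_bound DIM('a) \<delta>)"
    using mult_left_mono[OF emeasure_outer_meas_UNIV_le_1[OF \<alpha>], of "ennreal (sphere_cap_bound DIM('a) \<delta>)" \<gamma> R]
    by simp
  finally show ?thesis .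
qed

lemma sphere_cap_bound_mult_exp:
  "d \<ge> 1 \<Longrightarrow> sphere_cap_bound d (c * exp x) = sphere_cap_bound d c * exp ((real d - 1) * x)"
  by (simp add: sphere_cap_bound_def power_mult_distrib exp_of_nat_mult[symmetric] of_nat_diff)

lemma nn_integral_pD2_pair_le:
  assumes tree: "is_tree k E" "k > 0" and \<zeta>: "\<zeta> > 0" and \<alpha>: "\<alpha> > 0" and \<gamma>: "\<gamma> < 1/2" and R: "R > 0"
    and p: "p > 0"
  shows "(\<integral>\<^sup>+u. ennreal ((pD2 \<zeta> \<alpha> \<gamma> k E n R (polar_pt \<zeta> R (fst u)) (polar_pt \<zeta> R (snd u))) powr p)
           \<partial>((outer_meas \<alpha> \<gamma> R :: (real \<times> 'a::euclidean_space) measure) \<Otimes>\<^sub>M outer_meas \<alpha> \<gamma> R))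
         \<le> ennreal (sphere_cap_bound DIM('a) (44 * real k) * exp (- \<zeta> * (real DIM('a) - 1) * (1 - 2 * \<gamma>) * R / 2))"
proof -
  let ?M = "outer_meas \<alpha> \<gamma> R :: (real \<times> 'a) measure"
  define \<delta> where "\<delta> = 44 * real k * exp (- \<zeta> * (1 - 2 * \<gamma>) * R / 2)"
  define good where "good u \<longleftrightarrow> fst u \<le> \<gamma> * R \<and> norm (snd u) \<le> 1" for u :: "real \<times> 'a"
  interpret M: finite_measure ?M by (rule finite_measure_outer_meas[OF \<alpha>])
  interpret pair_sigma_finite ?M ?M ..
  have [measurable]: "Measurable.pred ?M good" unfolding good_def by measurable
  have "AE u in ?M \<Otimes>\<^sub>M ?M. good (fst u) \<and> good (snd u)"
    using AE_outer_meas[OF \<alpha>] unfolding good_def[abs_def] by (intro AE_pair_measure_fst_snd) measurable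
  then have "AE u in ?M \<Otimes>\<^sub>M ?M. pD2 \<zeta> \<alpha> \<gamma> k E n R (polar_pt \<zeta> R (fst u)) (polar_pt \<zeta> R (snd u)) \<noteq> 0 \<longrightarrow>
      u \<in> {v \<in> space (?M \<Otimes>\<^sub>M ?M). norm (sgn (snd (fst v)) - sgn (snd (snd v))) \<le> \<delta>}"
  proof eventually_elim
    case (elim u)
    then show ?case
      using pD2_polar_pt_eq_0_if_directions_far[OF tree(1) \<zeta> \<alpha> \<gamma> R, where u="fst u" and v="snd u" and n=n]
      by (auto simp: good_def \<delta>_def space_pair_measure) (meson not_le)
  qed
  then have "(\<integral>\<^sup>+u. ennreal ((pD2 \<zeta> \<alpha> \<gamma> k E n R (polar_pt \<zeta> R (fst u)) (polar_pt \<zeta> R (snd u))) powr p) \<partial>(?M \<Otimes>\<^sub>M ?M))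
      \<le> emeasure (?M \<Otimes>\<^sub>M ?M) {v \<in> space (?M \<Otimes>\<^sub>M ?M). norm (sgn (snd (fst v)) - sgn (snd (snd v))) \<le> \<delta>}"
    by (intro nn_integral_powr_le_emeasure pD2_nonneg[OF \<alpha>] pD2_le_1[OF \<alpha>] p) measurable
  also have "\<dots> \<le> ennreal (sphere_cap_bound DIM('a) \<delta>)"
    by (rule emeasure_outer_meas_close_pairs_le[OF \<alpha>]) (use tree(2) in \<open>simp add: \<delta>_def\<close>)
  also have "sphere_cap_bound DIM('a) \<delta> = sphere_cap_bound DIM('a) (44 * real k) * exp (- \<zeta> * (real DIM('a) - 1) * (1 - 2 * \<gamma>) * R / 2)"
    unfolding \<delta>_def by (subst sphere_cap_bound_mult_exp) (auto simp: DIM_positive Suc_le_eq algebra_simps)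
  finally show ?thesis .
qed

lemma nn_integral_pD2_triple_le:
  assumes tree: "is_tree k E" "k > 0" and \<zeta>: "\<zeta> > 0" and \<alpha>: "\<alpha> > 0" and \<gamma>: "\<gamma> < 1/2" and R: "R > 0"
    and p: "p > 0"
  shows "(\<integral>\<^sup>+u. ennreal ((pD2 \<zeta> \<alpha> \<gamma> k E n R (polar_pt \<zeta> R (fst u)) (polar_pt \<zeta> R (snd (snd u)))
                          * pD2 \<zeta> \<alpha> \<gamma> k E n R (polar_pt \<zeta> R (fst (snd u))) (polar_pt \<zeta> R (snd (snd u)))) powr p)
           \<partial>((outer_meas \<alpha> \<gamma> R :: (real \<times> 'a::euclidean_space) measure) \<Otimes>\<^sub>M outer_meas \<alpha> \<gamma> R \<Otimes>\<^sub>M outer_meas \<alpha> \<gamma> R))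
         \<le> ennreal ((sphere_cap_bound DIM('a) (44 * real k))\<^sup>2 * exp (- \<zeta> * (real DIM('a) - 1) * (1 - 2 * \<gamma>) * R))"
proof -
  let ?M = "outer_meas \<alpha> \<gamma> R :: (real \<times> 'a) measure"
  let ?pD2 = "\<lambda>u v. pD2 \<zeta> \<alpha> \<gamma> k E n R (polar_pt \<zeta> R u) (polar_pt \<zeta> R v)"
  define \<delta> where "\<delta> = 44 * real k * exp (- \<zeta> * (1 - 2 * \<gamma>) * R / 2)"
  define good where "good u \<longleftrightarrow> fst u \<le> \<gamma> * R \<and> norm (snd u) \<le> 1" for u :: "real \<times> 'a"
  define close where "close u v \<longleftrightarrow> norm (sgn (snd u) - sgn (snd v)) \<le> \<delta>" for u v :: "real \<times> 'a"
  have \<delta>: "\<delta> > 0" unfolding \<delta>_def using tree(2) by simp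
  interpret M: finite_measure ?M by (rule finite_measure_outer_meas[OF \<alpha>])
  interpret MM: finite_measure "?M \<Otimes>\<^sub>M ?M" by (intro finite_measure_pair_measure M.finite_measure_axioms)
  interpret M_M: pair_sigma_finite ?M ?M ..
  interpret M_MM: pair_sigma_finite ?M "?M \<Otimes>\<^sub>M ?M" ..
  have sgn_M [measurable]: "(\<lambda>x. sgn (snd x)) \<in> borel_measurable ?M" by simp
  have [measurable]: "(\<lambda>y. sgn (snd (fst y))) \<in> borel_measurable (?M \<Otimes>\<^sub>M ?M)"
    "(\<lambda>y. sgn (snd (snd y))) \<in> borel_measurable (?M \<Otimes>\<^sub>M ?M)"
    by (rule measurable_compose[OF measurable_fst sgn_M, unfolded comp_def]
        measurable_compose[OF measurable_snd sgn_M, unfolded comp_def])+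
  have far_zero: "?pD2 u v = 0" if "good u" "good v" "\<not> close u v" for u v
    using that unfolding good_def close_def \<delta>_def not_le
    by (intro pD2_polar_pt_eq_0_if_directions_far[OF tree(1) \<zeta> \<alpha> \<gamma> R]) auto
  have [measurable]: "Measurable.pred ?M good" unfolding good_def by measurable
  have [measurable]: "Measurable.pred (?M \<Otimes>\<^sub>M ?M) (\<lambda>y. close (fst y) (snd y))"
    unfolding close_def by measurable
  have "AE y in ?M \<Otimes>\<^sub>M ?M. good (fst y) \<and> good (snd y)"
    using AE_outer_meas[OF \<alpha>] unfolding good_def[abs_def] by (intro M_M.AE_pair_measure_fst_snd) measurable
  then have "AE u in ?M \<Otimes>\<^sub>M (?M \<Otimes>\<^sub>M ?M). good (fst u) \<and> (good (fst (snd u)) \<and> good (snd (snd u)))"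
    using AE_outer_meas[OF \<alpha>] unfolding good_def[abs_def] by (intro M_MM.AE_pair_measure_fst_snd) measurable
  then have "AE u in ?M \<Otimes>\<^sub>M (?M \<Otimes>\<^sub>M ?M). ?pD2 (fst u) (snd (snd u)) * ?pD2 (fst (snd u)) (snd (snd u)) \<noteq> 0 \<longrightarrow>
      u \<in> {u \<in> space (?M \<Otimes>\<^sub>M (?M \<Otimes>\<^sub>M ?M)). close (fst u) (snd (snd u)) \<and> close (fst (snd u)) (snd (snd u))}"
  proof eventually_elim
    case (elim u)
    then show ?case
      using far_zero[of "fst u" "snd (snd u)"] far_zero[of "fst (snd u)" "snd (snd u)"]
      by (auto simp: space_pair_measure)
  qed
  then have "(\<integral>\<^sup>+u. ennreal ((?pD2 (fst u) (snd (snd u)) * ?pD2 (fst (snd u)) (snd (snd u))) powr p) \<partial>(?M \<Otimes>\<^sub>M (?M \<Otimes>\<^sub>M ?M)))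
      \<le> emeasure (?M \<Otimes>\<^sub>M (?M \<Otimes>\<^sub>M ?M))
          {u \<in> space (?M \<Otimes>\<^sub>M (?M \<Otimes>\<^sub>M ?M)). close (fst u) (snd (snd u)) \<and> close (fst (snd u)) (snd (snd u))}"
    by (intro nn_integral_powr_le_emeasure mult_nonneg_nonneg mult_le_one pD2_nonneg[OF \<alpha>] pD2_le_1[OF \<alpha>] p)
      (unfold close_def, measurable)
  also have "\<dots> \<le> ennreal (sphere_cap_bound DIM('a) \<delta>) * emeasure (?M \<Otimes>\<^sub>M ?M) {y \<in> space (?M \<Otimes>\<^sub>M ?M). close (fst y) (snd y)}"
    unfolding close_def by (rule emeasure_outer_meas_pair_cap_le[OF \<alpha> \<delta> MM.finite_measure_axioms]) measurable
  also have "\<dots> \<le> ennreal (sphere_cap_bound DIM('a) \<delta>) * ennreal (sphere_cap_bound DIM('a) \<delta>)"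
    unfolding close_def by (intro mult_left_mono emeasure_outer_meas_close_pairs_le[OF \<alpha> \<delta>]) auto
  also have "\<dots> = ennreal ((sphere_cap_bound DIM('a) (44 * real k))\<^sup>2 * exp (- \<zeta> * (real DIM('a) - 1) * (1 - 2 * \<gamma>) * R))"
  proof -
    have "sphere_cap_bound DIM('a) \<delta> = sphere_cap_bound DIM('a) (44 * real k) * exp (- \<zeta> * (real DIM('a) - 1) * (1 - 2 * \<gamma>) * R / 2)"
      unfolding \<delta>_def by (subst sphere_cap_bound_mult_exp) (auto simp: DIM_positive Suc_le_eq algebra_simps)
    moreover have "sphere_cap_bound DIM('a) \<delta> \<ge> 0" using \<delta> by (simp add: sphere_cap_bound_def)
    ultimately show ?thesis
      by (simp add: ennreal_mult[symmetric] power2_eq_square mult_ac flip: exp_add)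
  qed
  finally show ?thesis .
qed

theorem lemma3p7:
  fixes \<zeta> \<alpha> \<gamma> a :: real and R :: "nat \<Rightarrow> real" and k :: nat and E :: "(nat \<times> nat) set"
  assumes dim: "DIM('a::euclidean_space) \<ge> 2"
    and zeta: "\<zeta> > 0" and alpha: "\<alpha> > 0"
    and k: "k \<ge> 2" and tree: "is_tree k E"
    and R: "filterlim R at_top sequentially"
    and rho: "(\<exists>c>0. (\<lambda>n. real n * exp (- \<zeta> * (real DIM('a) - 1) * R n / 2)) \<longlonglongrightarrow> c) \<or>
              filterlim (\<lambda>n. real n * exp (- \<zeta> * (real DIM('a) - 1) * R n / 2)) at_top sequentially"
    and gamma: "0 < \<gamma>" "\<gamma> < 1/2"
    and a: "0 < a" "a < 1"
  shows "(\<exists>C. \<forall>\<^sub>F n in sequentially.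
            (\<integral>\<^sup>+ u. ennreal ((pD2 \<zeta> \<alpha> \<gamma> k E n (R n) (polar_pt \<zeta> (R n) (fst u)) (polar_pt \<zeta> (R n) (snd (snd u)))
                          * pD2 \<zeta> \<alpha> \<gamma> k E n (R n) (polar_pt \<zeta> (R n) (fst (snd u))) (polar_pt \<zeta> (R n) (snd (snd u))))
                          powr a)
              \<partial>((outer_meas \<alpha> \<gamma> (R n) :: (real \<times> 'a) measure) \<Otimes>\<^sub>M outer_meas \<alpha> \<gamma> (R n) \<Otimes>\<^sub>M outer_meas \<alpha> \<gamma> (R n)))
            \<le> ennreal (C * exp (- \<zeta> * (real DIM('a) - 1) * (1 - 2 * \<gamma>) * R n)))
       \<and> (\<exists>C. \<forall>\<^sub>F n in sequentially.
            (\<integral>\<^sup>+ u. ennreal ((pD2 \<zeta> \<alpha> \<gamma> k E n (R n) (polar_pt \<zeta> (R n) (fst u)) (polar_pt \<zeta> (R n) (snd u))) powr a)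
              \<partial>((outer_meas \<alpha> \<gamma> (R n) :: (real \<times> 'a) measure) \<Otimes>\<^sub>M outer_meas \<alpha> \<gamma> (R n)))
            \<le> ennreal (C * exp (- \<zeta> * (real DIM('a) - 1) * (1 - 2 * \<gamma>) * R n / 2)))"
proof -
  have "\<forall>\<^sub>F n in sequentially. R n > 0" using R by (simp add: filterlim_at_top_dense)
  then show ?thesis
    using nn_integral_pD2_triple_le[OF tree _ zeta alpha gamma(2) _ a(1), where 'a='a]
      nn_integral_pD2_pair_le[OF tree _ zeta alpha gamma(2) _ a(1), where 'a='a] k
    by (intro conjI exI) (auto elim!: eventually_mono)
qed

end
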